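(* For any $0<\epsilon_p\le 1$ and integers $k$ and $d=\Omega(\ln k)$, there is a family of $k$-means instances over the cube $[0,\Delta/\sqrt{d}]^d$ such that the optimal clustering cost of every instance in the family is $0$, but any $(\epsilon_p,0)$-differentially private algorithm (outputting $k$ centers) incurs an expected cost of $\Omega\!\left(\frac{\Delta^2 k d}{\epsilon_p}\right)$ on the family (i.e. its expected cost is at least an absolute constant times this quantity on some instance of the family).
   Context: A $k$-means instance is a finite multiset $D\subset\mathbb{R}^d$; the cost of a set $S$ of $k$ centers is $f_D(S)=\sum_{p\in D}\min_{\mu\in S}\|p-\mu\|_2^2$, and the optimal clustering cost is the minimum of $f_D(S)$ over all $S\subset\mathbb{R}^d$ with $|S|=k$. Two datasets are neighbouring if their symmetric difference has exactly one element. A randomized algorithm $A$ is $(\epsilon,0)$-differentially private if for all neighbouring $D,D'$ and every measurable set $S$ of outputs, $\Pr(A(D)\in S)\le e^{\epsilon}\Pr(A(D')\in S)$. *)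

theory Defs
  imports "HOL-Probability.Probability" "HOL-Library.Multiset"
begin

text \<open>Points of R^d are represented as functions nat => real that vanish
  outside the coordinates 0..d-1.\<close>

definition Rd :: "nat \<Rightarrow> (nat \<Rightarrow> real) set" where
  "Rd d = {p. \<forall>i\<ge>d. p i = 0}"

definition sqdist :: "nat \<Rightarrow> (nat \<Rightarrow> real) \<Rightarrow> (nat \<Rightarrow> real) \<Rightarrow> real" where
  "sqdist d p q = (\<Sum>i<d. (p i - q i)^2)"

definition cube :: "nat \<Rightarrow> real \<Rightarrow> (nat \<Rightarrow> real) set" where
  "cube d \<Delta> = {p \<in> Rd d. \<forall>i<d. 0 \<le> p i \<and> p i \<le> \<Delta> / sqrt (real d)}"

definition kmeans_cost :: "nat \<Rightarrow> (nat \<Rightarrow> real) multiset \<Rightarrow> (nat \<Rightarrow> real) set \<Rightarrow> real" where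
  "kmeans_cost d D S = (\<Sum>p\<in>#D. Min ((\<lambda>\<mu>. sqdist d p \<mu>) ` S))"

definition opt_cost :: "nat \<Rightarrow> nat \<Rightarrow> (nat \<Rightarrow> real) multiset \<Rightarrow> real" where
  "opt_cost d k D = (INF S \<in> {S. S \<subseteq> Rd d \<and> finite S \<and> card S = k}. kmeans_cost d D S)"

definition out_space :: "nat \<Rightarrow> nat \<Rightarrow> (nat \<Rightarrow> nat \<Rightarrow> real) measure" where
  "out_space d k = PiM {..<k} (\<lambda>_. PiM {..<d} (\<lambda>_. borel))"

definition tuple_cost :: "nat \<Rightarrow> nat \<Rightarrow> (nat \<Rightarrow> real) multiset \<Rightarrow> (nat \<Rightarrow> nat \<Rightarrow> real) \<Rightarrow> real" where
  "tuple_cost d k D S = kmeans_cost d D (S ` {..<k})"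

definition neighbouring :: "'a multiset \<Rightarrow> 'a multiset \<Rightarrow> bool" where
  "neighbouring D D' \<longleftrightarrow> size (D - D') + size (D' - D) = 1"

definition pure_dp :: "real \<Rightarrow> 'a set \<Rightarrow> 'o measure \<Rightarrow> ('a multiset \<Rightarrow> 'o measure) \<Rightarrow> bool" where
  "pure_dp \<epsilon> U M A \<longleftrightarrow>
     (\<forall>D. set_mset D \<subseteq> U \<longrightarrow> prob_space (A D) \<and> sets (A D) = sets M) \<and>
     (\<forall>D D' S. set_mset D \<subseteq> U \<longrightarrow> set_mset D' \<subseteq> U \<longrightarrow> neighbouring D D' \<longrightarrow> S \<in> sets M \<longrightarrow>
        measure (A D) S \<le> exp \<epsilon> * measure (A D') S)"

end

theory Submission
  imports Defs
begin

text \<open>Packing argument. Let \<open>G\<close> be a finite set of points of the cube such that every ball of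
  squared radius \<open>r\<close> contains at most \<open>N\<close> of them. For \<open>f \<in> G\<^sup>k\<close> let \<open>D\<^sub>f\<close> consist of \<open>m\<close>
  copies of each \<open>f c\<close>; it has at most \<open>k\<close> distinct points, so its optimal cost is 0, while
  centers that leave some \<open>f c\<close> uncovered (no center within squared distance \<open>r\<close>) pay at
  least \<open>m r\<close> for it. Group privacy lets us replace the \<open>m\<close> copies of \<open>f c\<close> by nothing at a
  cost of a factor \<open>exp (\<epsilon> m)\<close> in every output probability; the remaining dataset does not
  depend on \<open>f c\<close>, and its output covers at most \<open>k N\<close> points of \<open>G\<close>. Averaging over \<open>f\<close>,
  each \<open>f c\<close> is covered with probability at most \<open>k exp (\<epsilon> m) N / card G \<le> 1/2\<close>, so some
  \<open>D\<^sub>f\<close> has expected cost at least \<open>k m r / 2\<close>.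

  For \<open>d \<ge> 16\<close> we take the \<open>2\<^sup>d\<close> vertices of the cube, \<open>r = \<Delta>\<^sup>2/64\<close> and \<open>m \<approx> d/(16 \<epsilon>)\<close>;
  a ball then only contains vertices within Hamming distance \<open>d/16\<close> of a fixed vertex, and
  there are exponentially fewer of those than \<open>2\<^sup>d\<close>. For \<open>d < 16\<close> the hypothesis
  \<open>d \<ge> 32 ln k\<close> forces \<open>k = 1\<close>, and six equally spaced points on an edge with \<open>m \<approx> 1/\<epsilon>\<close>
  suffice.\<close>

definition replicated_instance :: "'i set \<Rightarrow> nat \<Rightarrow> ('i \<Rightarrow> 'a) \<Rightarrow> 'a multiset" where
  "replicated_instance K m f = (\<Sum>c\<in>K. replicate_mset m (f c))"

lemma set_mset_replicated_instance:
  "finite K \<Longrightarrow> set_mset (replicated_instance K m f) \<subseteq> f ` K"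
  unfolding replicated_instance_def by (induction K rule: finite_induct) auto

lemma sum_mset_replicated_instance:
  fixes g :: "'a \<Rightarrow> real"
  assumes "finite K"
  shows "(\<Sum>p\<in>#replicated_instance K m f. g p) = (\<Sum>c\<in>K. m * g (f c))"
  using assms unfolding replicated_instance_def by (induction K rule: finite_induct) auto

lemma replicated_instance_remove:
  assumes "finite K" "c \<in> K"
  shows "replicated_instance K m f
           = replicated_instance (K - {c}) m (restrict f (K - {c})) + replicate_mset m (f c)"
proof -
  have "replicated_instance (K - {c}) m (restrict f (K - {c})) = replicated_instance (K - {c}) m f"
    unfolding replicated_instance_def by (rule sum.cong) auto
  then show ?thesis
    using assms unfolding replicated_instance_def by (simp add: sum.remove add.commute)
qed

lemma neighbouring_add_mset: "neighbouring (add_mset x D) D"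
  unfolding neighbouring_def by simp

lemma pure_dp_prob_space: "pure_dp \<epsilon> U M A \<Longrightarrow> set_mset D \<subseteq> U \<Longrightarrow> prob_space (A D)"
  unfolding pure_dp_def by blast

lemma pure_dp_sets: "pure_dp \<epsilon> U M A \<Longrightarrow> set_mset D \<subseteq> U \<Longrightarrow> sets (A D) = sets M"
  unfolding pure_dp_def by blast

lemma pure_dp_group_privacy:
  assumes dp: "pure_dp \<epsilon> U M A"
    and D: "set_mset D \<subseteq> U" and x: "x \<in> U" and S: "S \<in> sets M"
  shows "measure (A (D + replicate_mset m x)) S \<le> exp (\<epsilon> * m) * measure (A D) S"
proof (induction m)
  case 0
  then show ?case by simp
next
  case (Suc m)
  let ?D = "D + replicate_mset m x"
  have "measure (A (add_mset x ?D)) S \<le> exp \<epsilon> * measure (A ?D) S"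
    using dp D x S neighbouring_add_mset[of x ?D] unfolding pure_dp_def by auto
  also have "\<dots> \<le> exp \<epsilon> * (exp (\<epsilon> * m) * measure (A D) S)"
    using Suc by simp
  also have "\<dots> = exp (\<epsilon> * Suc m) * measure (A D) S"
    by (simp add: mult_exp_exp algebra_simps)
  finally show ?case by simp
qed

lemma sqdist_nonneg: "0 \<le> sqdist d p q"
  unfolding sqdist_def by (simp add: sum_nonneg)

lemma sqdist_self [simp]: "sqdist d p p = 0"
  unfolding sqdist_def by simp

lemma sqdist_ge_component: "i < d \<Longrightarrow> (p i - q i)^2 \<le> sqdist d p q"
  unfolding sqdist_def by (rule member_le_sum) auto

lemma kmeans_cost_nonneg:
  assumes "finite S" "S \<noteq> {}"
  shows "0 \<le> kmeans_cost d D S"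
proof -
  have "0 \<le> Min ((\<lambda>\<mu>. sqdist d p \<mu>) ` S)" for p
    using assms by (simp add: sqdist_nonneg)
  then show ?thesis
    unfolding kmeans_cost_def by (metis sum_mset_mono[of D "\<lambda>_. 0"] sum_mset.neutral_const)
qed

lemma kmeans_cost_eq_0:
  assumes "finite S" "set_mset D \<subseteq> S"
  shows "kmeans_cost d D S = 0"
proof -
  have "Min ((\<lambda>\<mu>. sqdist d p \<mu>) ` S) = 0" if "p \<in># D" for p
    using that assms by (intro Min_eqI) (auto simp: sqdist_nonneg intro!: image_eqI[of 0 _ p])
  then show ?thesis
    unfolding kmeans_cost_def by (simp add: sum_mset.neutral)
qed

lemma infinite_Rd:
  assumes "1 \<le> d"
  shows "infinite (Rd d)"
proof
  assume "finite (Rd d)"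
  moreover have "range (\<lambda>n::nat. \<lambda>i::nat. if i = 0 then real n else 0) \<subseteq> Rd d"
    using assms by (auto simp: Rd_def)
  moreover have "inj (\<lambda>n::nat. \<lambda>i::nat. if i = 0 then real n else 0)"
    by (rule injI) (drule fun_cong[of _ _ 0], simp)
  ultimately show False
    by (meson finite_imageD finite_subset infinite_UNIV_nat)
qed

lemma opt_cost_eq_0:
  assumes "1 \<le> d" "1 \<le> k" "finite P" "card P \<le> k" "P \<subseteq> Rd d" "set_mset D \<subseteq> P"
  shows "opt_cost d k D = 0"
proof -
  let ?admissible = "{S. S \<subseteq> Rd d \<and> finite S \<and> card S = k}"
  have "infinite (Rd d - P)"
    using infinite_Rd assms by simp
  then obtain B where B: "B \<subseteq> Rd d - P" "finite B" "card B = k - card P"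
    using infinite_arbitrarily_large by blast
  have "card (P \<union> B) = card P + card B"
    using assms(3) B(1,2) by (intro card_Un_disjoint) auto
  with B assms have S: "P \<union> B \<in> ?admissible"
    by auto
  have nonneg: "0 \<le> kmeans_cost d D S" if "S \<in> ?admissible" for S
    using that assms by (intro kmeans_cost_nonneg) auto
  then have "bdd_below (kmeans_cost d D ` ?admissible)"
    by (intro bdd_belowI[of _ 0]) blast
  from cINF_lower[OF this S] have "opt_cost d k D \<le> kmeans_cost d D (P \<union> B)"
    unfolding opt_cost_def .
  also have "\<dots> = 0"
    using assms B by (intro kmeans_cost_eq_0) auto
  finally have "opt_cost d k D \<le> 0" .
  moreover have "opt_cost d k D \<ge> 0"
    unfolding opt_cost_def using S nonneg by (intro cINF_greatest) auto
  ultimately show ?thesis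
    by simp
qed

definition near_center :: "nat \<Rightarrow> nat \<Rightarrow> real \<Rightarrow> (nat \<Rightarrow> real) \<Rightarrow> (nat \<Rightarrow> nat \<Rightarrow> real) set" where
  "near_center d k r x = {S \<in> space (out_space d k). \<exists>j<k. sqdist d x (S j) < r}"

lemma near_center_sets: "near_center d k r x \<in> sets (out_space d k)"
proof -
  have [measurable]: "(\<lambda>S. S j i) \<in> borel_measurable (out_space d k)" if "j < k" "i < d" for i j
    using measurable_comp[OF measurable_component_singleton[of j "{..<k}"]
        measurable_component_singleton[of i "{..<d}" "\<lambda>_. borel"]] that
    unfolding out_space_def by (simp add: comp_def)
  have "near_center d k r x = (\<Union>j<k. {S \<in> space (out_space d k). sqdist d x (S j) < r})"
    unfolding near_center_def by auto
  also have "\<dots> \<in> sets (out_space d k)"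
    unfolding sqdist_def by measurable
  finally show ?thesis .
qed

lemma tuple_cost_replicated_instance_ge:
  assumes "1 \<le> k" "0 \<le> r" "finite K" "S \<in> space (out_space d k)"
  shows "(\<Sum>c\<in>K. m * r * (1 - indicator (near_center d k r (f c)) S))
           \<le> tuple_cost d k (replicated_instance K m f) S"
proof -
  have centers: "finite (S ` {..<k})" "S ` {..<k} \<noteq> {}"
    using assms(1) by (auto simp: lessThan_empty_iff)
  have "r * (1 - indicator (near_center d k r x) S) \<le> Min ((\<lambda>\<mu>. sqdist d x \<mu>) ` S ` {..<k})" for x
  proof (cases "S \<in> near_center d k r x")
    case True
    then show ?thesis
      using centers by (simp add: sqdist_nonneg)
  next
    case False
    then have "\<forall>j<k. r \<le> sqdist d x (S j)"
      using assms(4) unfolding near_center_def by (metis (mono_tags, lifting) mem_Collect_eq not_less)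
    then show ?thesis
      using centers False by simp
  qed
  then show ?thesis
    unfolding tuple_cost_def kmeans_cost_def sum_mset_replicated_instance[OF assms(3)]
    by (intro sum_mono) (simp add: mult.assoc mult_left_mono)
qed

lemma nn_integral_tuple_cost_ge:
  assumes P: "prob_space P" "sets P = sets (out_space d k)"
    and "1 \<le> k" "0 \<le> r" "finite K"
  shows "ennreal (\<Sum>c\<in>K. m * r * (1 - measure P (near_center d k r (f c))))
           \<le> (\<integral>\<^sup>+S. tuple_cost d k (replicated_instance K m f) S \<partial>P)"
proof -
  interpret P: prob_space P by (rule P(1))
  define h where "h S = (\<Sum>c\<in>K. m * r * (1 - indicator (near_center d k r (f c)) S :: real))" for S
  have near: "near_center d k r x \<in> sets P" for x
    using near_center_sets P(2) by simp
  have indicator_integrable: "integrable P (indicator (near_center d k r x) :: _ \<Rightarrow> real)" for x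
    using near by (auto intro!: integrable_indicator simp: P.emeasure_eq_measure)
  have h_integrable: "integrable P h"
    unfolding h_def using indicator_integrable by auto
  have "integral\<^sup>L P h = (\<Sum>c\<in>K. m * r * (1 - measure P (near_center d k r (f c))))"
    unfolding h_def using indicator_integrable near P.prob_space sets.sets_into_space[OF near]
    by (simp add: Bochner_Integration.integral_sum integral_diff Int_absorb2)
  moreover have "0 \<le> h S" for S
    unfolding h_def using assms(4) by (intro sum_nonneg mult_nonneg_nonneg) (auto simp: indicator_def)
  ultimately have "(\<integral>\<^sup>+S. h S \<partial>P) = ennreal (\<Sum>c\<in>K. m * r * (1 - measure P (near_center d k r (f c))))"
    using nn_integral_eq_integral[OF h_integrable] by simp
  moreover have "(\<integral>\<^sup>+S. h S \<partial>P) \<le> (\<integral>\<^sup>+S. tuple_cost d k (replicated_instance K m f) S \<partial>P)"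
    using tuple_cost_replicated_instance_ge[OF assms(3-5)] sets_eq_imp_space_eq[OF P(2)]
    unfolding h_def by (intro nn_integral_mono ennreal_leI) auto
  ultimately show ?thesis
    by simp
qed

lemma card_near_center_le:
  assumes "finite G" "\<And>y. card {x \<in> G. sqdist d x y < r} \<le> N"
  shows "card {x \<in> G. \<exists>j<k. sqdist d x (S j) < r} \<le> k * N"
proof -
  have "{x \<in> G. \<exists>j<k. sqdist d x (S j) < r} = (\<Union>j<k. {x \<in> G. sqdist d x (S j) < r})"
    by auto
  also have "card \<dots> \<le> (\<Sum>j<k. card {x \<in> G. sqdist d x (S j) < r})"
    by (rule card_UN_le) simp
  also have "\<dots> \<le> k * N"
    using sum_mono[of "{..<k}" "\<lambda>j. card {x \<in> G. sqdist d x (S j) < r}" "\<lambda>_. N"] assms(2) by simp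
  finally show ?thesis .
qed

lemma sum_measure_near_center_le:
  assumes Q: "prob_space Q" "sets Q = sets (out_space d k)"
    and "finite G" "\<And>y. card {x \<in> G. sqdist d x y < r} \<le> N"
  shows "(\<Sum>x\<in>G. measure Q (near_center d k r x)) \<le> k * N"
proof -
  interpret Q: prob_space Q by (rule Q(1))
  have space: "space Q = space (out_space d k)"
    by (rule sets_eq_imp_space_eq[OF Q(2)])
  have near: "near_center d k r x \<in> sets Q" for x
    using near_center_sets Q(2) by simp
  have indicator_integrable: "integrable Q (indicator (near_center d k r x) :: _ \<Rightarrow> real)" for x
    using near by (auto intro!: integrable_indicator simp: Q.emeasure_eq_measure)
  have "(\<Sum>x\<in>G. measure Q (near_center d k r x))
          = integral\<^sup>L Q (\<lambda>S. \<Sum>x\<in>G. indicator (near_center d k r x) S)"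
    using indicator_integrable sets.sets_into_space[OF near]
    by (simp add: Bochner_Integration.integral_sum Int_absorb2)
  also have "\<dots> \<le> integral\<^sup>L Q (\<lambda>_. real (k * N))"
  proof (rule integral_mono)
    fix S assume "S \<in> space Q"
    then have "(\<Sum>x\<in>G. indicator (near_center d k r x) S :: real)
                 = card {x \<in> G. \<exists>j<k. sqdist d x (S j) < r}"
      using assms(3) space by (simp add: indicator_def near_center_def sum.If_cases Int_def)
    also have "\<dots> \<le> k * N"
      using card_near_center_le[OF assms(3,4), of k S] by (simp only: of_nat_mult[symmetric] of_nat_le_iff)
    finally show "(\<Sum>x\<in>G. indicator (near_center d k r x) S :: real) \<le> real (k * N)" .
  qed (use indicator_integrable in auto)
  also have "\<dots> = k * N"
    using Q.prob_space by simp
  finally show ?thesis .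
qed

lemma sum_PiE_remove:
  fixes \<Phi> :: "('i \<Rightarrow> 'a) \<Rightarrow> 'a \<Rightarrow> 'b::comm_monoid_add"
  assumes "finite K" "c \<in> K"
  shows "(\<Sum>f\<in>PiE K B. \<Phi> (restrict f (K - {c})) (f c))
           = (\<Sum>g\<in>PiE (K - {c}) B. \<Sum>x\<in>B c. \<Phi> g x)"
proof -
  let ?K = "K - {c}" and ?extend = "\<lambda>(x, g). g(c := x)"
  have "PiE K B = ?extend ` (B c \<times> PiE ?K B)"
    using PiE_insert_eq[of c ?K B] assms(2) by (simp add: insert_absorb)
  moreover have "inj_on ?extend (B c \<times> PiE ?K B)"
    using inj_combinator[of c ?K B] by simp
  moreover have "restrict (g(c := x)) ?K = g" if "g \<in> PiE ?K B" for g x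
    using that by (auto simp: restrict_def PiE_def extensional_def fun_eq_iff)
  ultimately have "(\<Sum>f\<in>PiE K B. \<Phi> (restrict f ?K) (f c)) = (\<Sum>(x, g)\<in>B c \<times> PiE ?K B. \<Phi> g x)"
    by (auto simp: sum.reindex intro!: sum.cong)
  also have "\<dots> = (\<Sum>g\<in>PiE ?K B. \<Sum>x\<in>B c. \<Phi> g x)"
    by (simp add: sum.cartesian_product[symmetric] sum.swap[of _ "B c"])
  finally show ?thesis .
qed

lemma sum_PiE_measure_near_center_le:
  assumes dp: "pure_dp \<epsilon> U (out_space d k) A"
    and G: "finite G" "G \<subseteq> U" and ball: "\<And>y. card {x \<in> G. sqdist d x y < r} \<le> N"
    and K: "finite K" "c \<in> K"
  shows "(\<Sum>f\<in>PiE K (\<lambda>_. G). measure (A (replicated_instance K m f)) (near_center d k r (f c)))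
           \<le> exp (\<epsilon> * m) * card G ^ (card K - 1) * (k * N)"
proof -
  let ?K = "K - {c}"
  let ?D = "\<lambda>g. replicated_instance ?K m g" and ?near = "near_center d k r"
  have D_in_U: "set_mset (?D g) \<subseteq> U" if "g ` ?K \<subseteq> G" for g
    using set_mset_replicated_instance[of ?K m g] that K G(2) by auto
  have "(\<Sum>f\<in>PiE K (\<lambda>_. G). measure (A (replicated_instance K m f)) (?near (f c)))
          \<le> (\<Sum>f\<in>PiE K (\<lambda>_. G). exp (\<epsilon> * m) * measure (A (?D (restrict f ?K))) (?near (f c)))"
  proof (rule sum_mono)
    fix f assume f: "f \<in> PiE K (\<lambda>_. G)"
    then have "f c \<in> U" "set_mset (?D (restrict f ?K)) \<subseteq> U"
      using K G(2) by (auto intro!: D_in_U simp: PiE_iff split: if_splits)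
    then show "measure (A (replicated_instance K m f)) (?near (f c))
                 \<le> exp (\<epsilon> * m) * measure (A (?D (restrict f ?K))) (?near (f c))"
      unfolding replicated_instance_remove[OF K, of m f]
      by (intro pure_dp_group_privacy[OF dp] near_center_sets)
  qed
  \<comment> \<open>Without the copies of \<open>f c\<close> the dataset no longer depends on \<open>f c\<close>, so the sum
    over \<open>f c \<in> G\<close> moves inside and becomes the expected number of points of \<open>G\<close> covered.\<close>
  also have "\<dots> = exp (\<epsilon> * m) * (\<Sum>g\<in>PiE ?K (\<lambda>_. G). \<Sum>x\<in>G. measure (A (?D g)) (?near x))"
    by (simp add: sum_distrib_left[symmetric] sum_PiE_remove[OF K, where B = "\<lambda>_. G"
          and \<Phi> = "\<lambda>g x. measure (A (?D g)) (?near x)"])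
  also have "\<dots> \<le> exp (\<epsilon> * m) * (\<Sum>g\<in>PiE ?K (\<lambda>_. G). real (k * N))"
  proof (intro mult_left_mono sum_mono)
    fix g assume "g \<in> PiE ?K (\<lambda>_. G)"
    then have "set_mset (?D g) \<subseteq> U"
      by (intro D_in_U) auto
    then show "(\<Sum>x\<in>G. measure (A (?D g)) (?near x)) \<le> real (k * N)"
      using sum_measure_near_center_le[OF pure_dp_prob_space[OF dp] pure_dp_sets[OF dp] G(1) ball]
      by simp
  qed simp
  also have "\<dots> = exp (\<epsilon> * m) * card G ^ (card K - 1) * (k * N)"
    using G(1) K by (simp add: card_PiE card_Diff_singleton)
  finally show ?thesis .
qed

lemma exists_ge_average:
  fixes g :: "'a \<Rightarrow> real" and a :: real
  assumes "finite A" "A \<noteq> {}" "card A * a \<le> (\<Sum>x\<in>A. g x)"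
  shows "\<exists>x\<in>A. a \<le> g x"
  using sum_bounded_above_strict[of A g a] assms by (force simp: card_gt_0_iff not_le)

lemma pure_dp_packing_lower_bound:
  assumes dp: "pure_dp \<epsilon> U (out_space d k) A" and k: "1 \<le> k"
    and G: "finite G" "G \<noteq> {}" "G \<subseteq> U" and ball: "\<And>y. card {x \<in> G. sqdist d x y < r} \<le> N"
    and r: "0 \<le> r" and packing: "real k * exp (\<epsilon> * m) * N \<le> card G / 2"
  shows "\<exists>f\<in>PiE {..<k} (\<lambda>_. G). ennreal (real k * real m * r / 2)
           \<le> (\<integral>\<^sup>+S. tuple_cost d k (replicated_instance {..<k} m f) S \<partial>A (replicated_instance {..<k} m f))"
proof -
  let ?F = "PiE {..<k} (\<lambda>_. G)" and ?D = "replicated_instance {..<k} m"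
  let ?hit = "\<lambda>f c. measure (A (?D f)) (near_center d k r (f c))"
  have card_F: "card ?F = card G ^ (k - 1) * card G"
    using k by (simp add: card_PiE power_eq_if mult.commute)
  have hit: "(\<Sum>f\<in>?F. ?hit f c) \<le> card ?F / 2" if "c < k" for c
  proof -
    have "(\<Sum>f\<in>?F. ?hit f c) \<le> exp (\<epsilon> * m) * card G ^ (k - 1) * (k * N)"
      using sum_PiE_measure_near_center_le[OF dp G(1,3) ball, of "{..<k}" c m] that by simp
    also have "\<dots> = card G ^ (k - 1) * (k * exp (\<epsilon> * m) * N)"
      by simp
    also have "\<dots> \<le> card G ^ (k - 1) * (card G / 2)"
      using packing by (intro mult_left_mono) auto
    also have "\<dots> = card ?F / 2"
      using card_F by simp
    finally show ?thesis .
  qed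
  have "(\<Sum>f\<in>?F. \<Sum>c<k. m * r * (1 - ?hit f c))
          = m * r * (card ?F * k - (\<Sum>c<k. \<Sum>f\<in>?F. ?hit f c))"
    by (simp add: sum_subtractf right_diff_distrib sum_distrib_left sum.swap[of _ "{..<k}"])
  also have "\<dots> \<ge> m * r * (card ?F * k - (\<Sum>c<k. card ?F / 2))"
    using hit r by (intro mult_left_mono diff_left_mono sum_mono) auto
  finally have "card ?F * (real k * real m * r / 2) \<le> (\<Sum>f\<in>?F. \<Sum>c<k. m * r * (1 - ?hit f c))"
    by (simp add: algebra_simps)
  then obtain f where f: "f \<in> ?F" "real k * real m * r / 2 \<le> (\<Sum>c<k. m * r * (1 - ?hit f c))"
    using exists_ge_average[of ?F "real k * real m * r / 2"] G(1,2) by (auto simp: finite_PiE PiE_eq_empty_iff)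
  have "set_mset (?D f) \<subseteq> U"
    using set_mset_replicated_instance[of "{..<k}" m f] f(1) G(3) by auto
  have "ennreal (real k * real m * r / 2) \<le> ennreal (\<Sum>c<k. m * r * (1 - ?hit f c))"
    using f(2) by (rule ennreal_leI)
  also have "\<dots> \<le> (\<integral>\<^sup>+S. tuple_cost d k (?D f) S \<partial>A (?D f))"
    using \<open>set_mset (?D f) \<subseteq> U\<close>
    by (intro nn_integral_tuple_cost_ge pure_dp_prob_space[OF dp] pure_dp_sets[OF dp] k r) auto
  finally show ?thesis
    using f(1) by blast
qed

definition hard_kmeans_family ::
    "real \<Rightarrow> nat \<Rightarrow> nat \<Rightarrow> real \<Rightarrow> real \<Rightarrow> (nat \<Rightarrow> real) multiset set \<Rightarrow> bool" where
  "hard_kmeans_family \<epsilon> k d \<Delta> T F \<longleftrightarrow>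
     (\<forall>D\<in>F. set_mset D \<subseteq> cube d \<Delta> \<and> opt_cost d k D = 0) \<and>
     (\<forall>A. pure_dp \<epsilon> (cube d \<Delta>) (out_space d k) A \<longrightarrow>
        (\<exists>D\<in>F. (\<integral>\<^sup>+ S. ennreal (tuple_cost d k D S) \<partial>(A D)) \<ge> ennreal T))"

lemma hard_kmeans_family_replicated_instance:
  assumes "1 \<le> d" "1 \<le> k"
    and G: "finite G" "G \<noteq> {}" "G \<subseteq> cube d \<Delta>" and ball: "\<And>y. card {x \<in> G. sqdist d x y < r} \<le> N"
    and "0 \<le> r" and packing: "real k * exp (\<epsilon> * m) * N \<le> card G / 2"
    and T: "T \<le> real k * real m * r / 2"
  shows "hard_kmeans_family \<epsilon> k d \<Delta> T (replicated_instance {..<k} m ` PiE {..<k} (\<lambda>_. G))"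
  unfolding hard_kmeans_family_def
proof (rule conjI; intro ballI allI impI)
  fix D assume "D \<in> replicated_instance {..<k} m ` PiE {..<k} (\<lambda>_. G)"
  then obtain f where f: "f \<in> PiE {..<k} (\<lambda>_. G)" and D: "D = replicated_instance {..<k} m f"
    by blast
  have D_centers: "set_mset D \<subseteq> f ` {..<k}"
    using set_mset_replicated_instance[of "{..<k}" m f] D by simp
  have centers: "f ` {..<k} \<subseteq> cube d \<Delta>"
    using f G(3) by auto
  then have "f ` {..<k} \<subseteq> Rd d"
    unfolding cube_def by blast
  moreover have "card (f ` {..<k}) \<le> k"
    using card_image_le[of "{..<k}" f] by simp
  ultimately have "opt_cost d k D = 0"
    using opt_cost_eq_0[OF assms(1,2) _ _ _ D_centers] by blast
  then show "set_mset D \<subseteq> cube d \<Delta> \<and> opt_cost d k D = 0"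
    using D_centers centers by blast
next
  fix A assume "pure_dp \<epsilon> (cube d \<Delta>) (out_space d k) A"
  from pure_dp_packing_lower_bound[OF this assms(2) G ball assms(7) packing]
  obtain f where f: "f \<in> PiE {..<k} (\<lambda>_. G)"
    and bound: "ennreal (real k * real m * r / 2) \<le> (\<integral>\<^sup>+S. tuple_cost d k (replicated_instance {..<k} m f) S
                                             \<partial>A (replicated_instance {..<k} m f))"
    by blast
  have "ennreal T \<le> ennreal (real k * real m * r / 2)"
    using T by (rule ennreal_leI)
  also note bound
  finally show "\<exists>D\<in>replicated_instance {..<k} m ` PiE {..<k} (\<lambda>_. G).
                  ennreal T \<le> (\<integral>\<^sup>+S. tuple_cost d k D S \<partial>A D)"
    using f by blast
qed

lemma nat_floor_bounds:
  assumes "1 \<le> x"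
  shows "x / 2 \<le> real (nat \<lfloor>x\<rfloor>)" "real (nat \<lfloor>x\<rfloor>) \<le> x"
proof -
  have "real (nat \<lfloor>x\<rfloor>) = of_int \<lfloor>x\<rfloor>" "1 \<le> \<lfloor>x\<rfloor>"
    using assms by auto
  then show "x / 2 \<le> real (nat \<lfloor>x\<rfloor>)" "real (nat \<lfloor>x\<rfloor>) \<le> x"
    by linarith+
qed

definition cube_vertices :: "nat \<Rightarrow> real \<Rightarrow> (nat \<Rightarrow> real) set" where
  "cube_vertices d s = (\<lambda>A i. s * indicator A i) ` Pow {..<d}"

lemma card_cube_vertices:
  assumes "s \<noteq> 0"
  shows "card (cube_vertices d s) = 2 ^ d"
proof -
  have "inj (\<lambda>A (i::nat). s * indicator A i :: real)"
  proof (rule injI)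
    fix A B :: "nat set"
    assume eq: "(\<lambda>i. s * indicator A i) = (\<lambda>i. s * indicator B i :: real)"
    show "A = B"
    proof (rule set_eqI)
      fix i
      from fun_cong[OF eq, of i] assms show "i \<in> A \<longleftrightarrow> i \<in> B"
        by (auto simp: indicator_def split: if_splits)
    qed
  qed
  then show ?thesis
    unfolding cube_vertices_def by (simp add: card_image inj_on_subset card_Pow)
qed

lemma cube_vertices_subset_cube: "0 \<le> \<Delta> \<Longrightarrow> cube_vertices d (\<Delta> / sqrt d) \<subseteq> cube d \<Delta>"
  unfolding cube_vertices_def cube_def Rd_def by (auto simp: indicator_def)

lemma card_cube_vertices_near_le:
  assumes "0 < s"
  shows "card {x \<in> cube_vertices d s. sqdist d x y < d * s^2 / 64}
           \<le> card {C \<in> Pow {..<d}. real (card C) \<le> d / 16}"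
proof -
  \<comment> \<open>\<open>Z\<close> is the vertex nearest to \<open>y\<close>; each coordinate where a vertex differs from it
    contributes at least \<open>(s/2)\<^sup>2\<close> to the distance from \<open>y\<close>.\<close>
  define Z where "Z = {i. i < d \<and> s / 2 < y i}"
  let ?flip = "\<lambda>C. (C - Z) \<union> (Z - C)" and ?vertex = "\<lambda>A (i::nat). s * indicator A i :: real"
  let ?small = "{C \<in> Pow {..<d}. real (card C) \<le> d / 16}"
  have "{x \<in> cube_vertices d s. sqdist d x y < d * s^2 / 64} \<subseteq> ?vertex ` ?flip ` ?small"
  proof
    fix x assume "x \<in> {x \<in> cube_vertices d s. sqdist d x y < d * s^2 / 64}"
    then obtain A where A: "A \<subseteq> {..<d}" "x = ?vertex A" and near: "sqdist d x y < d * s^2 / 64"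
      by (auto simp: cube_vertices_def)
    have flip_A: "?flip A \<subseteq> {..<d}"
      using A(1) by (auto simp: Z_def)
    have "card (?flip A) * (s^2 / 4) = (\<Sum>i\<in>?flip A. (s / 2)^2)"
      by (simp add: power_divide)
    also have "\<dots> \<le> (\<Sum>i\<in>?flip A. (x i - y i)^2)"
    proof (rule sum_mono)
      fix i assume "i \<in> ?flip A"
      then have "s / 2 \<le> \<bar>x i - y i\<bar>"
        using A assms by (auto simp: Z_def indicator_def abs_if)
      then show "(s / 2)^2 \<le> (x i - y i)^2"
        using abs_le_square_iff[of "s / 2" "x i - y i"] assms by simp
    qed
    also have "\<dots> \<le> sqdist d x y"
      unfolding sqdist_def using flip_A by (intro sum_mono2) auto
    finally have "card (?flip A) * (s^2 / 4) < d * s^2 / 64"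
      using near by linarith
    then have "?flip A \<in> ?small"
      using flip_A assms by (simp add: field_simps)
    moreover have "A = ?flip (?flip A)"
      by auto
    ultimately show "x \<in> ?vertex ` ?flip ` ?small"
      using A(2) by blast
  qed
  then have "card {x \<in> cube_vertices d s. sqdist d x y < d * s^2 / 64} \<le> card (?vertex ` ?flip ` ?small)"
    by (intro card_mono) auto
  also have "\<dots> \<le> card ?small"
    by (intro card_image_le[THEN order_trans] card_image_le) auto
  finally show ?thesis .
qed

lemma card_subsets_card_le:
  fixes t a :: real
  assumes "0 < t" "t \<le> 1"
  shows "real (card {C \<in> Pow {..<d}. real (card C) \<le> a}) \<le> (1 + t) ^ d / t powr a"
proof -
  let ?small = "{C \<in> Pow {..<d}. real (card C) \<le> a}"
  have "real (card ?small) = (\<Sum>C\<in>?small. 1)"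
    by simp
  also have "\<dots> \<le> (\<Sum>C\<in>?small. t ^ card C / t powr a)"
  proof (rule sum_mono)
    fix C assume "C \<in> ?small"
    then have "t powr a \<le> t powr real (card C)"
      using assms by (intro powr_mono') auto
    also have "\<dots> = t ^ card C"
      using assms by (simp add: powr_realpow)
    finally show "1 \<le> t ^ card C / t powr a"
      using assms by simp
  qed
  also have "\<dots> \<le> (\<Sum>C\<in>Pow {..<d}. t ^ card C / t powr a)"
    using assms by (intro sum_mono2) auto
  also have "\<dots> = (1 + t) ^ d / t powr a"
  proof -
    have "(\<Prod>i<d. t + 1) = (\<Sum>C\<in>Pow {..<d}. (\<Prod>i\<in>C. t) * (\<Prod>i\<in>{..<d} - C. 1))"
      by (rule prod_add) simp
    then show ?thesis
      by (simp add: sum_divide_distrib add.commute)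
  qed
  finally show ?thesis .
qed

text \<open>The factor \<open>exp (3 d / 32)\<close> accounts for \<open>k \<le> exp (d / 32)\<close> and \<open>exp (\<epsilon> m) \<le> exp (d / 16)\<close>;
  the second factor bounds the number of vertices in a ball (\<open>card_subsets_card_le\<close>
  with \<open>t = 1/16\<close>).\<close>

lemma cube_vertices_packing_estimate:
  assumes "16 \<le> d"
  shows "exp (3 * d / 32) * ((17 / 16) ^ d / (1 / 16) powr (d / 16)) \<le> 2 ^ d / 2"
proof -
  have "ln (17 / 16::real) \<le> 1 / 16"
    using ln_le_minus_one[of "17 / 16"] by simp
  then have "d * ln (17 / 16::real) \<le> d / 16"
    using mult_left_mono[of "ln (17 / 16)" "1 / 16" "real d"] by simp
  moreover have "2 / 3 * (3 * d / 4 - 1) \<le> ln 2 * (3 * d / 4 - 1)"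
    using assms ln2_ge_two_thirds by (intro mult_right_mono) auto
  then have "d / 2 - 2 / 3 \<le> 3 / 4 * (d * ln 2) - ln (2::real)"
    by (simp add: algebra_simps)
  ultimately have exponent: "3 * d / 32 + d * ln (17 / 16) + d * ln 2 / 4 \<le> d * ln 2 - ln (2::real)"
    using assms by linarith
  have "ln (16::real) = 4 * ln 2"
    using ln_realpow[of 2 4] by simp
  then have sixteenth: "(1 / 16::real) powr (d / 16) = exp (- (d * ln 2 / 4))"
    by (simp add: powr_def ln_div)
  have seventeen: "(17 / 16::real) ^ d = exp (d * ln (17 / 16))"
    by (simp add: exp_of_nat_mult)
  have "exp (3 * d / 32) * ((17 / 16) ^ d / (1 / 16) powr (d / 16))
          = exp (3 * d / 32 + d * ln (17 / 16) + d * ln 2 / 4)"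
    unfolding sixteenth seventeen exp_add exp_minus
    by (simp only: divide_inverse inverse_inverse_eq mult.assoc)
  also have "\<dots> \<le> exp (d * ln 2 - ln 2)"
    using exponent by simp
  also have "\<dots> = 2 ^ d / 2"
    by (simp add: exp_diff exp_of_nat_mult)
  finally show ?thesis .
qed

lemma hard_kmeans_family_cube_vertices:
  assumes d: "16 \<le> d" and k: "1 \<le> k" "32 * ln k \<le> d"
    and \<epsilon>: "0 < \<epsilon>" "\<epsilon> \<le> 1" and \<Delta>: "0 < \<Delta>"
  shows "\<exists>F. hard_kmeans_family \<epsilon> k d \<Delta> (1/102400 * \<Delta>^2 * real k * real d / \<epsilon>) F"
proof -
  define s where "s = \<Delta> / sqrt d"
  define m where "m = nat \<lfloor>d / (16 * \<epsilon>)\<rfloor>"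
  define N where "N = card {C \<in> Pow {..<d}. real (card C) \<le> d / 16}"
  have s: "0 < s" "d * s^2 = \<Delta>^2"
    using d \<Delta> by (auto simp: s_def power_divide)
  have "1 \<le> d / (16 * \<epsilon>)"
    using d \<epsilon> by (simp add: field_simps)
  from nat_floor_bounds[OF this] have m: "d / (32 * \<epsilon>) \<le> m" "m \<le> d / (16 * \<epsilon>)"
    unfolding m_def by simp_all
  have ball: "card {x \<in> cube_vertices d s. sqdist d x y < \<Delta>^2 / 64} \<le> N" for y
    using card_cube_vertices_near_le[OF s(1), of d y] s(2) by (simp add: N_def)
  have "real k * exp (\<epsilon> * m) * N \<le> exp (d / 32) * exp (d / 16) * ((17 / 16) ^ d / (1 / 16) powr (d / 16))"
  proof (intro mult_mono)
    have "real k = exp (ln k)"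
      using k(1) by simp
    also have "\<dots> \<le> exp (d / 32)"
      using k(2) by simp
    finally show "real k \<le> exp (d / 32)" .
    show "exp (\<epsilon> * m) \<le> exp (d / 16)"
      using m(2) \<epsilon> by (simp add: field_simps)
    show "real N \<le> (17 / 16) ^ d / (1 / 16) powr (d / 16)"
      unfolding N_def using card_subsets_card_le[of "1 / 16" d "d / 16"] by simp
  qed auto
  also have "\<dots> \<le> card (cube_vertices d s) / 2"
    using cube_vertices_packing_estimate[OF d] card_cube_vertices[of s d] s(1)
    by (simp add: exp_add[symmetric])
  finally have packing: "real k * exp (\<epsilon> * m) * N \<le> card (cube_vertices d s) / 2" .
  have "1/102400 * \<Delta>^2 * real k * real d / \<epsilon> \<le> real k * (d / (32 * \<epsilon>)) * (\<Delta>^2 / 64) / 2"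
    using \<epsilon> by (simp add: field_simps)
  also have "\<dots> \<le> real k * real m * (\<Delta>^2 / 64) / 2"
    using m(1) by (intro divide_right_mono mult_right_mono mult_left_mono) auto
  finally have T: "1/102400 * \<Delta>^2 * real k * real d / \<epsilon> \<le> real k * real m * (\<Delta>^2 / 64) / 2" .
  have "cube_vertices d s \<subseteq> cube d \<Delta>"
    unfolding s_def using \<Delta> by (intro cube_vertices_subset_cube) simp
  moreover have "finite (cube_vertices d s)" "cube_vertices d s \<noteq> {}"
    by (auto simp: cube_vertices_def)
  ultimately show ?thesis
    using hard_kmeans_family_replicated_instance[OF _ k(1) _ _ _ ball _ packing T] d \<epsilon> by auto
qed

definition line_points :: "real \<Rightarrow> nat \<Rightarrow> (nat \<Rightarrow> real) set" where
  "line_points h n = (\<lambda>j (i::nat). if i = 0 then real j * h else 0) ` {..<n}"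

lemma card_line_points: "h \<noteq> 0 \<Longrightarrow> card (line_points h n) = n"
  unfolding line_points_def
  by (subst card_image) (auto simp: inj_on_def dest: fun_cong[of _ _ 0])

lemma line_points_subset_cube:
  assumes "1 \<le> d" "0 \<le> h" "real (n - 1) * h \<le> \<Delta> / sqrt d"
  shows "line_points h n \<subseteq> cube d \<Delta>"
proof
  fix x assume "x \<in> line_points h n"
  then obtain j where j: "j < n" and x: "x = (\<lambda>i. if i = 0 then real j * h else 0)"
    by (auto simp: line_points_def)
  have "real j * h \<le> real (n - 1) * h"
    using j assms(2) by (intro mult_right_mono) auto
  then have "0 \<le> real j * h" "real j * h \<le> \<Delta> / sqrt d"
    using assms(2,3) by auto
  then show "x \<in> cube d \<Delta>"
    using assms(1) unfolding x cube_def Rd_def by auto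
qed

lemma card_line_points_near_le_1:
  assumes "1 \<le> d" "0 < h"
  shows "card {x \<in> line_points h n. sqdist d x y < h^2 / 4} \<le> 1"
proof -
  let ?point = "\<lambda>j (i::nat). if i = 0 then real j * h else 0"
  have close: "\<bar>real j * h - y 0\<bar> < h / 2" if "sqdist d (?point j) y < h^2 / 4" for j
  proof -
    have "(real j * h - y 0)^2 < (h / 2)^2"
      using sqdist_ge_component[of 0 d "?point j" y] assms(1) that by (simp add: power_divide)
    then show ?thesis
      using abs_le_square_iff[of "h / 2" "real j * h - y 0"] assms(2) by auto
  qed
  have same: "j = j'" if "sqdist d (?point j) y < h^2 / 4" "sqdist d (?point j') y < h^2 / 4" for j j'
  proof -
    have "\<bar>real j * h - real j' * h\<bar> < h"
      using close[OF that(1)] close[OF that(2)] by arith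
    then have scaled: "\<bar>real j - real j'\<bar> * h < 1 * h"
      using assms(2) by (simp add: abs_mult left_diff_distrib[symmetric])
    have "\<bar>real j - real j'\<bar> < 1"
      using mult_right_less_imp_less[OF scaled] assms(2) by simp
    then show "j = j'"
      by arith
  qed
  have "card {x \<in> line_points h n. sqdist d x y < h^2 / 4} \<le> Suc 0"
  proof (subst card_le_Suc0_iff_eq)
    show "finite {x \<in> line_points h n. sqdist d x y < h^2 / 4}"
      by (simp add: line_points_def)
    show "\<forall>a\<in>{x \<in> line_points h n. sqdist d x y < h^2 / 4}. \<forall>b\<in>{x \<in> line_points h n. sqdist d x y < h^2 / 4}. a = b"
      unfolding line_points_def using same by blast
  qed
  then show ?thesis
    by simp
qed

lemma hard_kmeans_family_line_points:
  assumes d: "1 \<le> d" "d \<le> 16" and \<epsilon>: "0 < \<epsilon>" "\<epsilon> \<le> 1" and \<Delta>: "0 < \<Delta>"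
  shows "\<exists>F. hard_kmeans_family \<epsilon> 1 d \<Delta> (1/102400 * \<Delta>^2 * real d / \<epsilon>) F"
proof -
  define h where "h = \<Delta> / (5 * sqrt d)"
  define m where "m = nat \<lfloor>1 / \<epsilon>\<rfloor>"
  have h: "0 < h" "h^2 = \<Delta>^2 / (25 * d)" "real (6 - 1) * h \<le> \<Delta> / sqrt d"
    using d \<Delta> by (auto simp: h_def power_divide power_mult_distrib)
  have "1 \<le> 1 / \<epsilon>"
    using \<epsilon> by simp
  from nat_floor_bounds[OF this] have m: "1 / (2 * \<epsilon>) \<le> m" "m \<le> 1 / \<epsilon>"
    unfolding m_def by simp_all
  have "exp (\<epsilon> * m) \<le> exp 1"
    using m(2) \<epsilon> by (simp add: field_simps)
  also have "\<dots> \<le> 3"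
    by (rule exp_le)
  finally have packing: "real 1 * exp (\<epsilon> * m) * real 1 \<le> card (line_points h 6) / 2"
    using card_line_points[of h 6] h(1) by simp
  have "real d * real d \<le> 16 * 16"
    using d by (intro mult_mono) auto
  then have "1/102400 * \<Delta>^2 * real d / \<epsilon> \<le> (1 / (2 * \<epsilon>)) * (\<Delta>^2 / (25 * d) / 4) / 2"
    using d \<epsilon> \<Delta> by (simp add: field_simps)
  also have "\<dots> \<le> real m * (\<Delta>^2 / (25 * d) / 4) / 2"
    using m(1) by (intro divide_right_mono mult_right_mono) auto
  also have "\<dots> = real 1 * real m * (h^2 / 4) / 2"
    using h(2) by simp
  finally have "1/102400 * \<Delta>^2 * real d / \<epsilon> \<le> real 1 * real m * (h^2 / 4) / 2" .
  with hard_kmeans_family_replicated_instance[OF d(1) _ _ _ line_points_subset_cube[OF d(1) _ h(3)]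
      card_line_points_near_le_1[OF d(1) h(1)] _ packing]
  show ?thesis
    using \<epsilon> h(1) card_line_points[of h 6] by fastforce
qed

theorem mainTheorem3:
  shows "\<exists>C>0. \<exists>c>0. \<forall>(\<epsilon>::real) (k::nat) (d::nat) (\<Delta>::real).
    0 < \<epsilon> \<and> \<epsilon> \<le> 1 \<and> k \<ge> 1 \<and> d \<ge> 1 \<and> real d \<ge> C * ln (real k) \<and> 0 < \<Delta> \<longrightarrow>
    (\<exists>F :: (nat \<Rightarrow> real) multiset set.
       (\<forall>D\<in>F. set_mset D \<subseteq> cube d \<Delta> \<and> opt_cost d k D = 0) \<and>
       (\<forall>A. pure_dp \<epsilon> (cube d \<Delta>) (out_space d k) A \<longrightarrow>
          (\<exists>D\<in>F. (\<integral>\<^sup>+ S. ennreal (tuple_cost d k D S) \<partial>(A D))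
                    \<ge> ennreal (c * \<Delta>^2 * real k * real d / \<epsilon>))))"
proof -
  have "\<exists>F. hard_kmeans_family \<epsilon> k d \<Delta> (1/102400 * \<Delta>^2 * real k * real d / \<epsilon>) F"
    if "0 < \<epsilon>" "\<epsilon> \<le> 1" "1 \<le> k" "1 \<le> d" "32 * ln (real k) \<le> real d" "0 < \<Delta>"
    for \<epsilon> k d \<Delta>
  proof (cases "16 \<le> d")
    case True
    then show ?thesis
      using hard_kmeans_family_cube_vertices that by blast
  next
    case False
    have "k = 1"
    proof (rule ccontr)
      assume "k \<noteq> 1"
      then have "ln 2 \<le> ln (real k)"
        using that(3) by simp
      then show False
        using ln2_ge_two_thirds that(5) False by linarith
    qed
    then show ?thesis
      using hard_kmeans_family_line_points[of d \<epsilon> \<Delta>] that False by simp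
  qed
  then have "\<forall>\<epsilon> k d \<Delta>. 0 < \<epsilon> \<and> \<epsilon> \<le> 1 \<and> k \<ge> 1 \<and> d \<ge> 1 \<and> real d \<ge> 32 * ln (real k) \<and> 0 < \<Delta> \<longrightarrow>
      (\<exists>F. hard_kmeans_family \<epsilon> k d \<Delta> (1/102400 * \<Delta>^2 * real k * real d / \<epsilon>) F)"
    by blast
  then show ?thesis
    unfolding hard_kmeans_family_def
    by (intro exI[of _ "32::real"] conjI exI[of _ "1/102400::real"]) simp_all
qed

end
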